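(* Fix $c\in(0,1/2)$, $\sigma,\varepsilon,\delta\in(0,1)$ and a probability distribution $\mu$ on $\mathbb R^d\times\mathbb R$. Let $\mathbb P\subseteq\mathbb P_{\mathrm O}(c)$ and let $\mathbb D$ be a class of covariate-outcome distributions such that: (1) $\mathbb D$ satisfies Condition 4 with mass function $M(\cdot)$ and constant $c$; (2) every $\mathcal P\in\mathbb D$ is $\sigma$-smooth with respect to $\mu$; (3) $\mathrm{fat}_\gamma(\mathbb P)<\infty$ at scale $\gamma=\Theta(c\sigma M(\varepsilon/2))$; (4) the covering number of $\mathbb D$ in total variation distance at scale $O(cM(\varepsilon/2))$ is finite. There is a universal constant $\eta\ge1/256$ and an algorithm that, given $n$ i.i.d. samples from $\mathcal C_{\mathcal D}$ for any observational study $\mathcal D$ realizable with respect to $(\mathbb P,\mathbb D)$, outputs $\hat\tau$ with $|\hat\tau-\tau_{\mathcal D}|\le\varepsilon$ with probability at least $1-\delta$, where $n=O\!\left(\frac{1}{\eta M(\varepsilon/2)^2}\Big(\mathrm{fat}_{\eta c\sigma M(\varepsilon/2)}(\mathbb P)\log\frac{1}{\eta c\sigma M(\varepsilon/2)}+\log\frac{N_{\eta cM(\varepsilon/2)}(\mathbb D)}{\delta}\Big)\right)$.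
   Context: An observational study is a probability distribution $\mathcal D$ of a random tuple $(X,T,Y(0),Y(1))$ with $X\in\mathbb R^d$, $T\in\{0,1\}$, $Y(0),Y(1)\in\mathbb R$; the laws $\mathcal D_{X,Y(t)}$ of $(X,Y(t))$ have densities. The censored distribution $\mathcal C_{\mathcal D}$ is the law of $(X,T,Y(T))$; $\tau_{\mathcal D}=\mathbb E_{\mathcal D}[Y(1)-Y(0)]$. Generalized propensity scores: $p_t(x,y)=\Pr_{\mathcal D}[T=t\mid X=x,Y(t)=y]$. $\mathcal D$ is realizable with respect to $(\mathbb P,\mathbb D)$ if $p_0,p_1\in\mathbb P$ and $\mathcal D_{X,Y(0)},\mathcal D_{X,Y(1)}\in\mathbb D$. $\mathbb P_{\mathrm O}(c)=\{p:\mathbb R^d\times\mathbb R\to[0,1]\ :\ c<p(x,y)<1-c\ \forall (x,y)\}$. For $\mathcal P$ with density, $\mathcal P(x,y)$ is its density. Condition 4: $\mathbb D$ satisfies it with mass function $M:(0,\infty)\to[0,1]$ if for every $\varepsilon>0$ and $\mathcal P,\mathcal Q\in\mathbb D$ with $|\mathbb E_{\mathcal P}[y]-\mathbb E_{\mathcal Q}[y]|>\varepsilon$ there is $S\subseteq\mathbb R^d\times\mathbb R$ with $\mathcal P(S),\mathcal Q(S)\ge M(\varepsilon)/c$ and $\mathcal P(x,y)/\mathcal Q(x,y)\notin\big(\tfrac{c}{2(1-c)},\tfrac{2(1-c)}{c}\big)$ for all $(x,y)\in S$. $\sigma$-smooth: a distribution with density $\mathcal P$ is $\sigma$-smooth w.r.t.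 $\mu$ if $\mathcal P(z)\le\mu(z)/\sigma$ for all $z$. Fat-shattering dimension: for a class $\mathbb H$ of functions $\mathcal Z\to[0,1]$, a set $\{s_1,\dots,s_m\}$ is $\gamma$-shattered if there are thresholds $t_i$ such that for every $b\in\{\pm1\}^m$ some $h_b\in\mathbb H$ has $b_i(h_b(s_i)-t_i)\ge\gamma$ for all $i$; $\mathrm{fat}_\gamma(\mathbb H)$ is the largest size of a $\gamma$-shattered set. Covering number: $N_\alpha(\mathbb D)$ is the smallest size of a set $\mathbb D_\alpha$ of distributions such that every $\mathcal P\in\mathbb D$ is within total variation distance $\alpha$ of some element of $\mathbb D_\alpha$. *)

theory Defs
  imports "HOL-Probability.Probability"
begin

text \<open>Covariates X in R^d are modelled as functions nat => real restricted to {..<d}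
 (the carrier of a finite product measure), so that d is an ordinary natural-number
 parameter and constants can be universal (independent of d).\<close>

definition cov_base :: "nat \<Rightarrow> ((nat \<Rightarrow> real) \<times> real) measure" where
  "cov_base d = (\<Pi>\<^sub>M i\<in>{..<d}. lborel) \<Otimes>\<^sub>M lborel"

definition obs_base :: "nat \<Rightarrow> ((nat \<Rightarrow> real) \<times> bool \<times> real \<times> real) measure" where
  "obs_base d = (\<Pi>\<^sub>M i\<in>{..<d}. lborel) \<Otimes>\<^sub>M (count_space UNIV \<Otimes>\<^sub>M (lborel \<Otimes>\<^sub>M lborel))"

definition cens_base :: "nat \<Rightarrow> ((nat \<Rightarrow> real) \<times> bool \<times> real) measure" where
  "cens_base d = (\<Pi>\<^sub>M i\<in>{..<d}. lborel) \<Otimes>\<^sub>M (count_space UNIV \<Otimes>\<^sub>M lborel)"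

text \<open>T = 1 is encoded as True, T = 0 as False.\<close>

definition xy_proj :: "bool \<Rightarrow> (nat \<Rightarrow> real) \<times> bool \<times> real \<times> real \<Rightarrow> (nat \<Rightarrow> real) \<times> real" where
  "xy_proj t = (\<lambda>(x, s, y0, y1). (x, if t then y1 else y0))"

definition censor :: "(nat \<Rightarrow> real) \<times> bool \<times> real \<times> real \<Rightarrow> (nat \<Rightarrow> real) \<times> bool \<times> real" where
  "censor = (\<lambda>(x, s, y0, y1). (x, s, if s then y1 else y0))"

definition outcome0 :: "(nat \<Rightarrow> real) \<times> bool \<times> real \<times> real \<Rightarrow> real" where
  "outcome0 = (\<lambda>(x, s, y0, y1). y0)"

definition outcome1 :: "(nat \<Rightarrow> real) \<times> bool \<times> real \<times> real \<Rightarrow> real" where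
  "outcome1 = (\<lambda>(x, s, y0, y1). y1)"

definition marg :: "nat \<Rightarrow> ((nat \<Rightarrow> real) \<times> bool \<times> real \<times> real) measure \<Rightarrow> bool
    \<Rightarrow> ((nat \<Rightarrow> real) \<times> real) measure" where
  "marg d D t = distr D (cov_base d) (xy_proj t)"

text \<open>Observational study: law of (X,T,Y(0),Y(1)) such that both (X,Y(t)) have densities.\<close>
definition obs_study :: "nat \<Rightarrow> ((nat \<Rightarrow> real) \<times> bool \<times> real \<times> real) measure \<Rightarrow> bool" where
  "obs_study d D \<longleftrightarrow> prob_space D \<and> sets D = sets (obs_base d) \<and>
     (\<forall>t. \<exists>f. f \<in> borel_measurable (cov_base d) \<and> marg d D t = density (cov_base d) f)"

definition censored :: "nat \<Rightarrow> ((nat \<Rightarrow> real) \<times> bool \<times> real \<times> real) measure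
    \<Rightarrow> ((nat \<Rightarrow> real) \<times> bool \<times> real) measure" where
  "censored d D = distr D (cens_base d) censor"

definition ate :: "((nat \<Rightarrow> real) \<times> bool \<times> real \<times> real) measure \<Rightarrow> real" where
  "ate D = (\<integral>\<omega>. outcome1 \<omega> - outcome0 \<omega> \<partial>D)"

text \<open>Distributions with densities are represented by their (pointwise) density functions
 with respect to Lebesgue measure on R^d x R.\<close>
definition dens_meas :: "nat \<Rightarrow> ((nat \<Rightarrow> real) \<times> real \<Rightarrow> real) \<Rightarrow> ((nat \<Rightarrow> real) \<times> real) measure" where
  "dens_meas d f = density (cov_base d) (\<lambda>z. ennreal (f z))"

definition is_density :: "nat \<Rightarrow> ((nat \<Rightarrow> real) \<times> real \<Rightarrow> real) \<Rightarrow> bool" where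
  "is_density d f \<longleftrightarrow> f \<in> borel_measurable (cov_base d) \<and>
     (\<forall>z\<in>space (cov_base d). 0 \<le> f z) \<and> prob_space (dens_meas d f)"

text \<open>p is a version of the generalized propensity score p_t(x,y) = Pr[T=t | X=x, Y(t)=y].\<close>
definition is_propensity :: "nat \<Rightarrow> ((nat \<Rightarrow> real) \<times> bool \<times> real \<times> real) measure \<Rightarrow> bool
    \<Rightarrow> ((nat \<Rightarrow> real) \<times> real \<Rightarrow> real) \<Rightarrow> bool" where
  "is_propensity d D t p \<longleftrightarrow> p \<in> borel_measurable (cov_base d) \<and>
     (\<forall>A\<in>sets (cov_base d).
        measure D {\<omega>\<in>space D. fst (snd \<omega>) = t \<and> xy_proj t \<omega> \<in> A}
          = (\<integral>z. indicator A z * p z \<partial>marg d D t))"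

definition realizable :: "nat \<Rightarrow> ((nat \<Rightarrow> real) \<times> real \<Rightarrow> real) set
    \<Rightarrow> ((nat \<Rightarrow> real) \<times> real \<Rightarrow> real) set
    \<Rightarrow> ((nat \<Rightarrow> real) \<times> bool \<times> real \<times> real) measure \<Rightarrow> bool" where
  "realizable d PP DD D \<longleftrightarrow> obs_study d D \<and>
     (\<forall>t. \<exists>p\<in>PP. is_propensity d D t p) \<and>
     (\<forall>t. \<exists>f\<in>DD. marg d D t = dens_meas d f)"

definition P_O :: "nat \<Rightarrow> real \<Rightarrow> ((nat \<Rightarrow> real) \<times> real \<Rightarrow> real) set" where
  "P_O d c = {p. \<forall>z\<in>space (cov_base d). c < p z \<and> p z < 1 - c}"

definition mean_y :: "nat \<Rightarrow> ((nat \<Rightarrow> real) \<times> real \<Rightarrow> real) \<Rightarrow> real" where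
  "mean_y d P = (\<integral>z. snd z * P z \<partial>cov_base d)"

definition condition4 :: "nat \<Rightarrow> ((nat \<Rightarrow> real) \<times> real \<Rightarrow> real) set \<Rightarrow> (real \<Rightarrow> real) \<Rightarrow> real \<Rightarrow> bool" where
  "condition4 d DD M c \<longleftrightarrow> (\<forall>e>0. \<forall>P\<in>DD. \<forall>Q\<in>DD. \<bar>mean_y d P - mean_y d Q\<bar> > e \<longrightarrow>
     (\<exists>S\<in>sets (cov_base d). measure (dens_meas d P) S \<ge> M e / c \<and>
        measure (dens_meas d Q) S \<ge> M e / c \<and>
        (\<forall>z\<in>S. P z / Q z \<notin> {c / (2 * (1 - c)) <..< 2 * (1 - c) / c})))"

definition smooth :: "nat \<Rightarrow> real \<Rightarrow> ((nat \<Rightarrow> real) \<times> real \<Rightarrow> real) \<Rightarrow> ((nat \<Rightarrow> real) \<times> real \<Rightarrow> real) \<Rightarrow> bool" where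
  "smooth d \<sigma> \<mu> P \<longleftrightarrow> (\<forall>z\<in>space (cov_base d). P z \<le> \<mu> z / \<sigma>)"

definition fat_shatters :: "nat \<Rightarrow> real \<Rightarrow> ((nat \<Rightarrow> real) \<times> real \<Rightarrow> real) set
    \<Rightarrow> ((nat \<Rightarrow> real) \<times> real) set \<Rightarrow> bool" where
  "fat_shatters d \<gamma> H S \<longleftrightarrow> S \<subseteq> space (cov_base d) \<and> finite S \<and>
     (\<exists>thr. \<forall>B\<subseteq>S. \<exists>h\<in>H. \<forall>s\<in>S.
        (s \<in> B \<longrightarrow> h s - thr s \<ge> \<gamma>) \<and> (s \<notin> B \<longrightarrow> thr s - h s \<ge> \<gamma>))"

definition fat_finite :: "nat \<Rightarrow> real \<Rightarrow> ((nat \<Rightarrow> real) \<times> real \<Rightarrow> real) set \<Rightarrow> bool" where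
  "fat_finite d \<gamma> H \<longleftrightarrow> bdd_above {card S | S. fat_shatters d \<gamma> H S}"

definition fat :: "nat \<Rightarrow> real \<Rightarrow> ((nat \<Rightarrow> real) \<times> real \<Rightarrow> real) set \<Rightarrow> nat" where
  "fat d \<gamma> H = Sup {card S | S. fat_shatters d \<gamma> H S}"

definition tv_dist :: "'a measure \<Rightarrow> 'a measure \<Rightarrow> real" where
  "tv_dist P Q = (SUP A\<in>sets P. \<bar>measure P A - measure Q A\<bar>)"

definition is_cover :: "nat \<Rightarrow> real \<Rightarrow> ((nat \<Rightarrow> real) \<times> real \<Rightarrow> real) set
    \<Rightarrow> ((nat \<Rightarrow> real) \<times> real) measure set \<Rightarrow> bool" where
  "is_cover d \<alpha> DD C \<longleftrightarrow> finite C \<and>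
     (\<forall>Q\<in>C. prob_space Q \<and> sets Q = sets (cov_base d)) \<and>
     (\<forall>P\<in>DD. \<exists>Q\<in>C. tv_dist (dens_meas d P) Q \<le> \<alpha>)"

definition cover_finite :: "nat \<Rightarrow> real \<Rightarrow> ((nat \<Rightarrow> real) \<times> real \<Rightarrow> real) set \<Rightarrow> bool" where
  "cover_finite d \<alpha> DD \<longleftrightarrow> (\<exists>C. is_cover d \<alpha> DD C)"

definition covering_number :: "nat \<Rightarrow> real \<Rightarrow> ((nat \<Rightarrow> real) \<times> real \<Rightarrow> real) set \<Rightarrow> nat" where
  "covering_number d \<alpha> DD = Inf {card C | C. is_cover d \<alpha> DD C}"

end

theory Submission
  imports Defs
begin

(* Since the propensities lie in (c, 1 - c), the observable mass Pr[T = t, (X, Y(t)) \<in> S] is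
   between c and 1 - c times the mass of S under the law of (X, Y(t)).  Replace a finite
   total-variation cover of the outcome class by representatives taken from the class, and for
   each t estimate E[Y(t)] by the mean of the first representative P that passes, against every
   other representative Q, the tests "the empirical observable mass of the region where one of
   P, Q is much smaller than the other lies between c and 1 - c times its P-mass, up to a slack".
   When all these finitely many empirical frequencies are accurate -- which Hoeffding's inequality
   and a union bound guarantee -- the representative of the true law passes, and any passing
   candidate has the right mean up to \<epsilon>/2: otherwise Condition 4 yields a set of large mass
   on which the density ratio leaves the band (c/(2(1-c)), 2(1-c)/c), and this set is covered,
   up to sets of small mass, by the two test regions, so one of the tests fails. *)

lemma measurable_xy_proj [measurable]: "xy_proj t \<in> measurable (obs_base d) (cov_base d)"
  unfolding xy_proj_def obs_base_def cov_base_def case_prod_beta by measurable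

lemma measurable_censor [measurable]: "censor \<in> measurable (obs_base d) (cens_base d)"
  unfolding censor_def obs_base_def cens_base_def case_prod_beta by measurable

lemma measurable_snd_cov_base [measurable]: "snd \<in> borel_measurable (cov_base d)"
  unfolding cov_base_def by measurable

lemma integral_outcome_eq_mean_y:
  assumes D: "obs_study d D" and f: "is_density d f" and marg: "marg d D t = dens_meas d f"
  shows "(\<integral>\<omega>. snd (xy_proj t \<omega>) \<partial>D) = mean_y d f"
proof -
  have "sets D = sets (obs_base d)" using D by (simp add: obs_study_def)
  then have proj: "xy_proj t \<in> measurable D (cov_base d)"
    using measurable_cong_sets measurable_xy_proj by blast
  have "(\<integral>\<omega>. snd (xy_proj t \<omega>) \<partial>D) = (\<integral>z. snd z \<partial>marg d D t)"
    unfolding marg_def by (simp add: integral_distr[OF proj])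
  also have "\<dots> = (\<integral>z. f z *\<^sub>R snd z \<partial>cov_base d)"
    using f unfolding marg dens_meas_def is_density_def
    by (subst integral_density) auto
  finally show ?thesis by (simp add: mean_y_def mult.commute)
qed

lemma ate_eq_mean_y_diff:
  assumes D: "obs_study d D" and "integrable D outcome0" "integrable D outcome1"
    and f0: "is_density d f0" "marg d D False = dens_meas d f0"
    and f1: "is_density d f1" "marg d D True = dens_meas d f1"
  shows "ate D = mean_y d f1 - mean_y d f0"
proof -
  have "outcome0 = (\<lambda>\<omega>. snd (xy_proj False \<omega>))" "outcome1 = (\<lambda>\<omega>. snd (xy_proj True \<omega>))"
    by (auto simp: outcome0_def outcome1_def xy_proj_def)
  then have "(\<integral>\<omega>. outcome0 \<omega> \<partial>D) = mean_y d f0" "(\<integral>\<omega>. outcome1 \<omega> \<partial>D) = mean_y d f1"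
    using integral_outcome_eq_mean_y[OF D f0] integral_outcome_eq_mean_y[OF D f1] by simp_all
  then show ?thesis
    unfolding ate_def using assms(2,3) by simp
qed

abbreviation dprob :: "nat \<Rightarrow> ((nat \<Rightarrow> real) \<times> real \<Rightarrow> real) \<Rightarrow> ((nat \<Rightarrow> real) \<times> real) set \<Rightarrow> real"
  where "dprob d P S \<equiv> measure (dens_meas d P) S"

lemma sets_dens_meas [simp, measurable_cong]: "sets (dens_meas d P) = sets (cov_base d)"
  by (simp add: dens_meas_def)

lemma space_dens_meas [simp]: "space (dens_meas d P) = space (cov_base d)"
  by (simp add: dens_meas_def)

lemma dprob_le_scaled:
  assumes P: "is_density d P" and Q: "is_density d Q" and B: "B \<in> sets (cov_base d)"
    and k: "0 \<le> k" and le: "\<And>z. z \<in> B \<Longrightarrow> P z \<le> k * Q z"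
  shows "dprob d P B \<le> k * dprob d Q B"
proof -
  interpret P: prob_space "dens_meas d P" using P by (simp add: is_density_def)
  interpret Q: prob_space "dens_meas d Q" using Q by (simp add: is_density_def)
  have [measurable]: "P \<in> borel_measurable (cov_base d)" "Q \<in> borel_measurable (cov_base d)"
    using P Q by (auto simp: is_density_def)
  have "ennreal (dprob d P B) = emeasure (dens_meas d P) B"
    by (simp add: P.emeasure_eq_measure)
  also have "\<dots> = (\<integral>\<^sup>+ z. ennreal (P z) * indicator B z \<partial>cov_base d)"
    unfolding dens_meas_def using B by (simp add: emeasure_density)
  also have "\<dots> \<le> (\<integral>\<^sup>+ z. ennreal k * (ennreal (Q z) * indicator B z) \<partial>cov_base d)"
  proof (intro nn_integral_mono)
    fix z
    show "ennreal (P z) * indicator B z \<le> ennreal k * (ennreal (Q z) * indicator B z)"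
    proof (cases "z \<in> B")
      case True
      have "ennreal (P z) \<le> ennreal (k * Q z)" using le[OF True] by (rule ennreal_leI)
      also have "\<dots> \<le> ennreal k * ennreal (Q z)"
        using k by (cases "Q z \<ge> 0") (auto simp: ennreal_mult ennreal_neg[OF mult_nonneg_nonpos])
      finally show ?thesis using True by simp
    qed simp
  qed
  also have "\<dots> = ennreal k * emeasure (dens_meas d Q) B"
    unfolding dens_meas_def using B by (simp add: nn_integral_cmult emeasure_density)
  also have "\<dots> = ennreal k * ennreal (dprob d Q B)"
    by (simp add: Q.emeasure_eq_measure)
  also have "\<dots> = ennreal (k * dprob d Q B)"
    using k by (simp add: ennreal_mult)
  finally show ?thesis
    using k by simp
qed

lemma measure_diff_le_tv_dist:
  assumes "prob_space P" "prob_space Q" "sets Q = sets P" "A \<in> sets P"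
  shows "\<bar>measure P A - measure Q A\<bar> \<le> tv_dist P Q"
proof -
  interpret P: prob_space P by fact
  interpret Q: prob_space Q by fact
  have "bdd_above ((\<lambda>A. \<bar>measure P A - measure Q A\<bar>) ` sets P)"
  proof (rule bdd_aboveI2)
    fix A show "\<bar>measure P A - measure Q A\<bar> \<le> 1"
      using P.prob_le_1[of A] Q.prob_le_1[of A] measure_nonneg[of P A] measure_nonneg[of Q A]
      unfolding abs_le_iff by linarith
  qed
  then show ?thesis
    unfolding tv_dist_def using assms(4) by (rule cSUP_upper2) simp
qed

lemma joint_mass_bounds_by_propensity:
  assumes propensity: "is_propensity d D t p"
    and f: "is_density d f" and marg: "marg d D t = dens_meas d f"
    and p_bounds: "\<And>z. z \<in> space (cov_base d) \<Longrightarrow> c \<le> p z \<and> p z \<le> 1 - c"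
    and S: "S \<in> sets (cov_base d)"
  defines "g \<equiv> measure D {\<omega>\<in>space D. fst (snd \<omega>) = t \<and> xy_proj t \<omega> \<in> S}"
  shows "c * dprob d f S \<le> g \<and> g \<le> (1 - c) * dprob d f S"
proof -
  interpret F: prob_space "dens_meas d f" using f by (simp add: is_density_def)
  have [measurable]: "p \<in> borel_measurable (cov_base d)"
    using propensity by (simp add: is_propensity_def)
  have g: "g = (\<integral>z. indicator S z * p z \<partial>dens_meas d f)"
    using propensity S marg by (simp add: is_propensity_def g_def)
  have int: "integrable (dens_meas d f) (\<lambda>z. indicator S z * p z)"
    using p_bounds S
    by (intro F.integrable_const_bound[where B="\<bar>c\<bar> + \<bar>1 - c\<bar>"] AE_I2)
       (fastforce simp: indicator_def abs_le_iff dest!: p_bounds)+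
  have ind: "integrable (dens_meas d f) (indicator S :: _ \<Rightarrow> real)"
    using S by (simp add: F.emeasure_eq_measure)
  have "c * dprob d f S = (\<integral>z. indicator S z * c \<partial>dens_meas d f)"
    using S by simp
  also have "\<dots> \<le> g"
    unfolding g using S
    by (intro integral_mono int integrable_mult_left ind) (auto simp: indicator_def dest!: p_bounds)
  finally have lower: "c * dprob d f S \<le> g" .
  have "g \<le> (\<integral>z. indicator S z * (1 - c) \<partial>dens_meas d f)"
    unfolding g using S
    by (intro integral_mono int integrable_mult_left ind) (auto simp: indicator_def dest!: p_bounds)
  also have "\<dots> = (1 - c) * dprob d f S"
    using S by simp
  finally show ?thesis using lower by simp
qed

(* The threshold is the band edge c/(2(1-c)) of Condition 4 inflated by 3/2, so that the true
   density may be replaced by a representative that is within a factor 3/2 of it. *)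
definition test_region :: "nat \<Rightarrow> real \<Rightarrow> ((nat \<Rightarrow> real) \<times> real \<Rightarrow> real)
    \<Rightarrow> ((nat \<Rightarrow> real) \<times> real \<Rightarrow> real) \<Rightarrow> bool \<Rightarrow> ((nat \<Rightarrow> real) \<times> real) set" where
  "test_region d c P Q b =
     (if b then {z \<in> space (cov_base d). P z \<le> 3 * c / (4 * (1 - c)) * Q z}
      else {z \<in> space (cov_base d). Q z \<le> 3 * c / (4 * (1 - c)) * P z})"

lemma test_region_sets:
  assumes "is_density d P" "is_density d Q"
  shows "test_region d c P Q b \<in> sets (cov_base d)"
proof -
  have [measurable]: "P \<in> borel_measurable (cov_base d)" "Q \<in> borel_measurable (cov_base d)"
    using assms by (auto simp: is_density_def)
  show ?thesis unfolding test_region_def by (cases b) auto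
qed

definition passes_tests :: "nat \<Rightarrow> real \<Rightarrow> real \<Rightarrow> ((nat \<Rightarrow> real) \<times> real \<Rightarrow> real) set
    \<Rightarrow> (((nat \<Rightarrow> real) \<times> real) set \<Rightarrow> real) \<Rightarrow> ((nat \<Rightarrow> real) \<times> real \<Rightarrow> real) \<Rightarrow> bool" where
  "passes_tests d c s R h P \<longleftrightarrow> (\<forall>Q\<in>R. \<forall>b.
     c * dprob d P (test_region d c P Q b) - s \<le> h (test_region d c P Q b) \<and>
     h (test_region d c P Q b) \<le> (1 - c) * dprob d P (test_region d c P Q b) + s)"

lemma passes_tests_subset: "passes_tests d c s R h P \<Longrightarrow> R' \<subseteq> R \<Longrightarrow> passes_tests d c s R' h P"
  unfolding passes_tests_def by blast

lemma passes_tests_if_close: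
  fixes c s a u :: real
  assumes "0 \<le> c" "c \<le> 1" "0 \<le> a"
    and close: "\<And>S. S \<in> sets (cov_base d) \<Longrightarrow> \<bar>dprob d F S - dprob d I S\<bar> \<le> a"
    and g: "\<And>S. S \<in> sets (cov_base d) \<Longrightarrow> c * dprob d F S \<le> g S \<and> g S \<le> (1 - c) * dprob d F S"
    and h: "\<And>Q b. Q \<in> R \<Longrightarrow> \<bar>h (test_region d c I Q b) - g (test_region d c I Q b)\<bar> \<le> u"
    and dens: "is_density d I" "\<And>Q. Q \<in> R \<Longrightarrow> is_density d Q"
  shows "passes_tests d c (a + u) R h I"
  unfolding passes_tests_def
proof (intro ballI allI)
  fix Q b assume Q: "Q \<in> R"
  define X where "X = test_region d c I Q b"
  have X: "X \<in> sets (cov_base d)" unfolding X_def using dens Q by (intro test_region_sets) auto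
  have "c * (dprob d I X - a) \<le> c * dprob d F X"
    "(1 - c) * dprob d F X \<le> (1 - c) * (dprob d I X + a)"
    using close[OF X] assms(1,2) by (auto intro!: mult_left_mono simp: abs_le_iff)
  moreover have "c * a \<le> a" "(1 - c) * a \<le> a"
    using assms(1-3) by (auto intro: mult_left_le_one_le)
  ultimately show "c * dprob d I X - (a + u) \<le> h X \<and> h X \<le> (1 - c) * dprob d I X + (a + u)"
    using g[OF X] h[OF Q, of b] unfolding X_def[symmetric] abs_le_iff by (simp add: algebra_simps)
qed

lemma upper_test_mass_bound:
  fixes c a s u F I J g h :: real
  assumes c: "0 < c" "c < 1/2" and "\<bar>F - I\<bar> \<le> a" "c * F \<le> g" "\<bar>h - g\<bar> \<le> u"
    and "h \<le> (1 - c) * J + s" and J: "J \<le> 3 * c / (4 * (1 - c)) * I"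
  shows "c * F \<le> 3 * c * a + 4 * (s + u)"
proof -
  have "(1 - c) * J \<le> (1 - c) * (3 * c / (4 * (1 - c)) * I)"
    using J c by (intro mult_left_mono) auto
  also have "\<dots> = 3 / 4 * (c * I)" using c by (simp add: field_simps)
  also have "\<dots> \<le> 3 / 4 * (c * (F + a))"
    using assms(3) c by (intro mult_left_mono) (auto simp: abs_le_iff)
  finally show ?thesis using assms(4-6) by (simp add: abs_le_iff algebra_simps)
qed

lemma lower_test_mass_bound:
  fixes c a s u F I J g h :: real
  assumes c: "0 < c" "c < 1/2" and "0 \<le> a" "0 \<le> s + u"
    and "\<bar>F - I\<bar> \<le> a" "g \<le> (1 - c) * F" "\<bar>h - g\<bar> \<le> u"
    and "c * J - s \<le> h" and I: "I \<le> 3 * c / (4 * (1 - c)) * J"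
  shows "c * F \<le> 2 * a + 3 * (s + u)"
proof -
  have "4 / 3 * ((1 - c) * I) \<le> 4 / 3 * ((1 - c) * (3 * c / (4 * (1 - c)) * J))"
    using I c by (intro mult_left_mono) auto
  also have "\<dots> = c * J" using c by (simp add: field_simps)
  finally have "4 / 3 * ((1 - c) * I) \<le> c * J" .
  moreover have "(1 - c) * F \<le> (1 - c) * (I + a)"
    using assms(5) c by (intro mult_left_mono) (auto simp: abs_le_iff)
  moreover have "(1 - c) * (I - 3 * a) = (1 - c) * I - 3 * ((1 - c) * a)"
    "(1 - c) * (I + a) = (1 - c) * I + (1 - c) * a"
    by (simp_all add: algebra_simps)
  ultimately have "(1 - c) * (I - 3 * a) \<le> 3 * (s + u)"
    using assms(6-8) by (simp only: abs_le_iff) argo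
  then have "c * (I - 3 * a) \<le> 3 * (s + u)"
  proof (cases "0 \<le> I - 3 * a")
    case True
    then have "c * (I - 3 * a) \<le> (1 - c) * (I - 3 * a)" using c by (intro mult_right_mono) auto
    also note \<open>(1 - c) * (I - 3 * a) \<le> 3 * (s + u)\<close>
    finally show ?thesis .
  next
    case False
    then have "c * (I - 3 * a) \<le> 0" using c by (intro mult_nonneg_nonpos) auto
    then show ?thesis by (rule order_trans) (use assms(4) in simp)
  qed
  moreover have "c * (4 * a) \<le> 2 * a" using mult_right_mono[of c "1/2" "4 * a"] c assms(3) by simp
  moreover have "c * F \<le> c * (I + a)"
    using assms(5) c by (intro mult_left_mono) (auto simp: abs_le_iff)
  ultimately show ?thesis by (simp add: algebra_simps)
qed

lemma ratio_outside_band_cases: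
  fixes c p f q :: real
  assumes c: "0 < c" "c < 1/2" and ratio: "p / f \<notin> {c / (2 * (1 - c)) <..< 2 * (1 - c) / c}"
  shows "f \<le> 0 \<or> q < 2/3 * f \<or> f < 2/3 * q \<or>
         p \<le> 3 * c / (4 * (1 - c)) * q \<or> q \<le> 3 * c / (4 * (1 - c)) * p"
proof (rule ccontr)
  define r where "r = c / (2 * (1 - c))"
  have r: "0 < r" "2 * (1 - c) / c = 1 / r" "3 * c / (4 * (1 - c)) = 3/2 * r"
    using c by (auto simp: r_def field_simps)
  assume "\<not> ?thesis"
  then have f: "0 < f" and q: "2/3 * f \<le> q" "2/3 * q \<le> f"
    and no_test: "3/2 * r * q < p" "3/2 * r * p < q"
    unfolding r by auto
  have "r * f \<le> 3/2 * r * q" using mult_left_mono[of f "3/2 * q" r] q(1) r(1) by simp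
  with no_test(1) have "r * f < p" by linarith
  moreover have "r * p < f" using no_test(2) q(2) by linarith
  then have "p < f / r" using r(1) by (simp add: field_simps)
  ultimately have "r < p / f \<and> p / f < 1 / r"
    using f r(1) by (simp add: field_simps)
  then show False using ratio unfolding r_def[symmetric] r(2) by auto
qed

lemma dprob_le_test_regions:
  assumes c: "0 < c" "c < 1/2" and dens: "is_density d F" "is_density d P" "is_density d I"
    and S: "S \<in> sets (cov_base d)"
    and ratio: "\<And>z. z \<in> S \<Longrightarrow> P z / F z \<notin> {c / (2 * (1 - c)) <..< 2 * (1 - c) / c}"
  shows "dprob d F S \<le> dprob d F (test_region d c P I True) + dprob d F (test_region d c P I False)
    + dprob d F {z \<in> space (cov_base d). I z < 2/3 * F z}
    + dprob d F {z \<in> space (cov_base d). F z < 2/3 * I z}"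
proof -
  have [measurable]: "F \<in> borel_measurable (cov_base d)" "I \<in> borel_measurable (cov_base d)"
    using dens by (auto simp: is_density_def)
  interpret F: prob_space "dens_meas d F" using dens(1) by (simp add: is_density_def)
  define XA where "XA = test_region d c P I True"
  define XC where "XC = test_region d c P I False"
  define B1 where "B1 = {z \<in> space (cov_base d). I z < 2/3 * F z}"
  define B2 where "B2 = {z \<in> space (cov_base d). F z < 2/3 * I z}"
  define Z where "Z = {z \<in> space (cov_base d). F z \<le> 0}"
  have sets: "XA \<in> sets (cov_base d)" "XC \<in> sets (cov_base d)" "B1 \<in> sets (cov_base d)"
    "B2 \<in> sets (cov_base d)" "Z \<in> sets (cov_base d)"
    unfolding XA_def XC_def using dens by (auto intro: test_region_sets simp: B1_def B2_def Z_def)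
  have "S \<subseteq> XA \<union> XC \<union> B1 \<union> B2 \<union> Z"
    using ratio_outside_band_cases[OF c ratio] sets.sets_into_space[OF S]
    by (auto simp: XA_def XC_def B1_def B2_def Z_def test_region_def)
  then have "dprob d F S \<le> dprob d F (XA \<union> XC \<union> B1 \<union> B2 \<union> Z)"
    using sets by (intro F.finite_measure_mono) auto
  also have "\<dots> \<le> dprob d F XA + dprob d F XC + dprob d F B1 + dprob d F B2 + dprob d F Z"
    using sets by (intro order_trans[OF measure_Un_le] add_mono) auto
  also have "dprob d F Z \<le> 0 * dprob d F Z"
    using sets(5) by (intro dprob_le_scaled dens) (auto simp: Z_def)
  finally show ?thesis by (simp add: XA_def XC_def B1_def B2_def)
qed

lemma mean_y_close_if_passes_test:
  assumes c: "0 < c" "c < 1/2" and e: "0 < e" and m: "0 < M e"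
    and cond: "condition4 d DD M c" and DD: "F \<in> DD" "P \<in> DD"
    and dens: "is_density d F" "is_density d P" "is_density d I"
    and a: "0 \<le> a" "a \<le> M e / 256" and u: "0 \<le> u" "u \<le> M e / 32"
    and close: "\<And>S. S \<in> sets (cov_base d) \<Longrightarrow> \<bar>dprob d F S - dprob d I S\<bar> \<le> a"
    and g: "\<And>S. S \<in> sets (cov_base d) \<Longrightarrow> c * dprob d F S \<le> g S \<and> g S \<le> (1 - c) * dprob d F S"
    and h: "\<And>b. \<bar>h (test_region d c P I b) - g (test_region d c P I b)\<bar> \<le> u"
    and pass: "passes_tests d c (a + u) {I} h P"
  shows "\<bar>mean_y d P - mean_y d F\<bar> \<le> e"
proof (rule ccontr)
  assume "\<not> ?thesis"
  then obtain S where S: "S \<in> sets (cov_base d)" and mass: "M e / c \<le> dprob d F S"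
    and ratio: "\<And>z. z \<in> S \<Longrightarrow> P z / F z \<notin> {c / (2 * (1 - c)) <..< 2 * (1 - c) / c}"
    using cond DD e unfolding condition4_def by (metis not_le)
  have [measurable]: "F \<in> borel_measurable (cov_base d)" "I \<in> borel_measurable (cov_base d)"
    using dens by (auto simp: is_density_def)
  define XA where "XA = test_region d c P I True"
  define XC where "XC = test_region d c P I False"
  define B1 where "B1 = {z \<in> space (cov_base d). I z < 2/3 * F z}"
  define B2 where "B2 = {z \<in> space (cov_base d). F z < 2/3 * I z}"
  have sets: "XA \<in> sets (cov_base d)" "XC \<in> sets (cov_base d)" "B1 \<in> sets (cov_base d)"
    "B2 \<in> sets (cov_base d)"
    unfolding XA_def XC_def using dens by (auto intro: test_region_sets simp: B1_def B2_def)
  have pass_XA: "h XA \<le> (1 - c) * dprob d P XA + (a + u)"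
    and pass_XC: "c * dprob d P XC - (a + u) \<le> h XC"
    using pass unfolding passes_tests_def XA_def XC_def by blast+
  have "dprob d P XA \<le> 3 * c / (4 * (1 - c)) * dprob d I XA"
    using c sets(1) by (intro dprob_le_scaled dens) (auto simp: XA_def test_region_def)
  from upper_test_mass_bound[OF c close[OF sets(1)] g[OF sets(1), THEN conjunct1]
      h[of True, folded XA_def] pass_XA this]
  have "c * dprob d F XA \<le> 3 * c * a + 4 * ((a + u) + u)" .
  moreover have "dprob d I XC \<le> 3 * c / (4 * (1 - c)) * dprob d P XC"
    using c sets(2) by (intro dprob_le_scaled dens) (auto simp: XC_def test_region_def)
  from lower_test_mass_bound[OF c a(1) _ close[OF sets(2)] g[OF sets(2), THEN conjunct2]
      h[of False, folded XC_def] pass_XC this]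
  have "c * dprob d F XC \<le> 2 * a + 3 * ((a + u) + u)" using a u by simp
  moreover have "dprob d I B1 \<le> 2/3 * dprob d F B1"
    using sets(3) by (intro dprob_le_scaled dens) (auto simp: B1_def)
  then have "dprob d F B1 \<le> 3 * a" using close[OF sets(3)] by (simp add: abs_le_iff)
  moreover have "dprob d F B2 \<le> 2/3 * dprob d I B2"
    using sets(4) by (intro dprob_le_scaled dens) (auto simp: B2_def)
  then have "dprob d F B2 \<le> 2 * a" using close[OF sets(4)] by (simp add: abs_le_iff)
  moreover have half: "c * x \<le> y / 2" if "0 \<le> x" "x \<le> y" for x y
    using mult_mono[of c "1/2" x y] that c by simp
  moreover have "c * a \<le> a / 2" using half[of a a] a(1) by simp
  ultimately have "c * dprob d F XA \<le> 3/2 * a + 4 * a + 8 * u" "c * dprob d F XC \<le> 5 * a + 6 * u"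
    "c * dprob d F B1 \<le> 3/2 * a" "c * dprob d F B2 \<le> a"
    using half[of "dprob d F B1" "3 * a"] half[of "dprob d F B2" "2 * a"] by simp_all
  moreover have "M e \<le> c * dprob d F S"
    using mult_left_mono[OF mass, of c] c by simp
  moreover have
    "c * dprob d F S \<le> c * dprob d F XA + c * dprob d F XC + c * dprob d F B1 + c * dprob d F B2"
    using mult_left_mono[OF dprob_le_test_regions[OF c dens S ratio], of c] c
    by (simp add: XA_def XC_def B1_def B2_def distrib_left)
  ultimately show False using a u m by linarith
qed

definition cens_event :: "nat \<Rightarrow> bool \<Rightarrow> ((nat \<Rightarrow> real) \<times> real) set
    \<Rightarrow> ((nat \<Rightarrow> real) \<times> bool \<times> real) set" where
  "cens_event d t S = {w \<in> space (cens_base d). fst (snd w) = t \<and> (fst w, snd (snd w)) \<in> S}"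

definition emp_freq :: "nat \<Rightarrow> nat \<Rightarrow> bool \<Rightarrow> ((nat \<Rightarrow> real) \<times> real) set
    \<Rightarrow> (nat \<Rightarrow> (nat \<Rightarrow> real) \<times> bool \<times> real) \<Rightarrow> real" where
  "emp_freq d n t S \<omega> = (\<Sum>i<n. indicator (cens_event d t S) (\<omega> i)) / real n"

lemma cens_event_sets:
  assumes [measurable]: "S \<in> sets (cov_base d)"
  shows "cens_event d t S \<in> sets (cens_base d)"
proof -
  have [measurable]: "(\<lambda>w. (fst w, snd (snd w))) \<in> measurable (cens_base d) (cov_base d)"
    "Measurable.pred (cens_base d) (\<lambda>w. fst (snd w) = t)"
    unfolding cens_base_def cov_base_def by measurable
  show ?thesis unfolding cens_event_def by measurable
qed

lemma emp_freq_measurable [measurable]: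
  assumes "sets C = sets (cens_base d)" "S \<in> sets (cov_base d)"
  shows "emp_freq d n t S \<in> borel_measurable (PiM {..<n} (\<lambda>_. C))"
proof -
  have [measurable]: "cens_event d t S \<in> sets C" using assms cens_event_sets by simp
  have [measurable]: "(\<lambda>\<omega>. \<omega> i) \<in> measurable (PiM {..<n} (\<lambda>_. C)) C" if "i < n" for i
    using that by (intro measurable_component_singleton) auto
  show ?thesis unfolding emp_freq_def[abs_def] by measurable
qed

lemma prob_empirical_freq_deviation:
  assumes C: "prob_space C" and G: "G \<in> sets C" and n: "0 < n" and u: "0 \<le> u"
  shows "measure (PiM {..<n} (\<lambda>_. C))
     {\<omega> \<in> space (PiM {..<n} (\<lambda>_. C)). u \<le> \<bar>(\<Sum>i<n. indicator G (\<omega> i)) / real n - measure C G\<bar>}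
     \<le> 2 * exp (- 2 * real n * u\<^sup>2)"
proof -
  let ?P = "PiM {..<n} (\<lambda>_. C)"
  interpret C: prob_space C by fact
  interpret P: prob_space ?P by (intro prob_space_PiM) (use C in auto)
  have rv: "(\<lambda>\<omega>. \<omega> i) \<in> measurable ?P C" if "i \<in> {..<n}" for i
    using that by (intro measurable_component_singleton) auto
  have dist: "distr ?P C (\<lambda>\<omega>. \<omega> i) = C" if "i \<in> {..<n}" for i
    using that C by (intro distr_PiM_component) auto
  have "P.indep_vars (\<lambda>_. C) (\<lambda>i \<omega>. \<omega> i) {..<n}"
  proof (subst P.indep_vars_iff_distr_eq_PiM')
    have "distr ?P ?P (\<lambda>x. \<lambda>i\<in>{..<n}. x i) = distr ?P ?P (\<lambda>x. x)"
      by (intro distr_cong) (auto simp: space_PiM)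
    also have "\<dots> = PiM {..<n} (\<lambda>i. distr ?P C (\<lambda>\<omega>. \<omega> i))"
      by (auto intro!: PiM_cong simp: dist)
    finally show "distr ?P (PiM {..<n} (\<lambda>_. C)) (\<lambda>x. \<lambda>i\<in>{..<n}. x i) = \<dots>" .
  qed (use rv n in auto)
  then have indep: "P.indep_vars (\<lambda>_. borel) (\<lambda>i \<omega>. indicator G (\<omega> i) :: real) {..<n}"
    using G by (intro P.indep_vars_compose2[where Y="\<lambda>_. indicator G"]) auto
  have mean: "P.expectation (\<lambda>\<omega>. indicator G (\<omega> i)) = measure C G" if "i \<in> {..<n}" for i
    using rv[OF that] G dist[OF that] by (subst integral_distr[symmetric]) auto
  interpret H: Hoeffding_ineq ?P "{..<n}" "\<lambda>i \<omega>. indicator G (\<omega> i)" "\<lambda>_. 0" "\<lambda>_. 1"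
    "real n * measure C G"
    by unfold_locales (use indep mean in \<open>auto simp: indicator_def\<close>)
  have "\<bar>s - real n * m\<bar> \<ge> real n * u \<longleftrightarrow> u \<le> \<bar>s / real n - m\<bar>" for s m
    using n by (simp add: field_simps abs_mult[symmetric] abs_of_pos)
  then have "{\<omega> \<in> space ?P. u \<le> \<bar>(\<Sum>i<n. indicator G (\<omega> i)) / real n - measure C G\<bar>}
      = {\<omega> \<in> space ?P. \<bar>(\<Sum>i\<in>{..<n}. indicator G (\<omega> i)) - real n * measure C G\<bar> \<ge> real n * u}"
    by simp
  also have "P.prob \<dots> \<le> 2 * exp (- 2 * (real n * u)\<^sup>2 / (\<Sum>i\<in>{..<n}. (1 - 0)\<^sup>2))"
    using n u by (intro H.Hoeffding_ineq_abs_ge) auto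
  also have "\<dots> = 2 * exp (- 2 * real n * u\<^sup>2)"
    using n by (simp add: power2_eq_square)
  finally show ?thesis .
qed

lemma prob_empirical_freqs_uniformly_close:
  assumes C: "prob_space C" and J: "finite J" and G: "\<And>j. j \<in> J \<Longrightarrow> G j \<in> sets C"
    and n: "0 < n" and u: "0 \<le> u"
  shows "1 - real (card J) * (2 * exp (- 2 * real n * u\<^sup>2)) \<le> measure (PiM {..<n} (\<lambda>_. C))
    {\<omega> \<in> space (PiM {..<n} (\<lambda>_. C)).
      \<forall>j\<in>J. \<bar>(\<Sum>i<n. indicator (G j) (\<omega> i)) / real n - measure C (G j)\<bar> < u}"
proof -
  let ?P = "PiM {..<n} (\<lambda>_. C)"
  let ?bad = "\<lambda>j. {\<omega> \<in> space ?P. u \<le> \<bar>(\<Sum>i<n. indicator (G j) (\<omega> i)) / real n - measure C (G j)\<bar>}"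
  interpret P: prob_space ?P using C by (intro prob_space_PiM) auto
  have [measurable]: "(\<lambda>\<omega>. \<omega> i) \<in> measurable ?P C" if "i < n" for i
    using that by (intro measurable_component_singleton) auto
  have bad: "?bad j \<in> sets ?P" if "j \<in> J" for j
    using G[OF that] by measurable
  have "P.prob (\<Union>j\<in>J. ?bad j) \<le> (\<Sum>j\<in>J. P.prob (?bad j))"
    using J bad by (intro measure_UNION_le) auto
  also have "\<dots> \<le> (\<Sum>j\<in>J. 2 * exp (- 2 * real n * u\<^sup>2))"
    using prob_empirical_freq_deviation[OF C G n u] by (intro sum_mono) auto
  finally have "1 - real (card J) * (2 * exp (- 2 * real n * u\<^sup>2))
      \<le> P.prob (space ?P - (\<Union>j\<in>J. ?bad j))"
    using J bad by (subst P.prob_compl) auto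
  also have "space ?P - (\<Union>j\<in>J. ?bad j) =
      {\<omega> \<in> space ?P. \<forall>j\<in>J. \<bar>(\<Sum>i<n. indicator (G j) (\<omega> i)) / real n - measure C (G j)\<bar> < u}"
    by (auto simp: not_le)
  finally show ?thesis .
qed

lemma measurable_censor_obs_study:
  assumes "obs_study d D"
  shows "censor \<in> measurable D (cens_base d)"
proof -
  have "sets D = sets (obs_base d)" using assms by (simp add: obs_study_def)
  then show ?thesis using measurable_cong_sets measurable_censor by blast
qed

lemma prob_space_censored: "obs_study d D \<Longrightarrow> prob_space (censored d D)"
  unfolding censored_def
  by (intro prob_space.prob_space_distr measurable_censor_obs_study) (auto simp: obs_study_def)

lemma sets_censored [simp]: "sets (censored d D) = sets (cens_base d)"
  by (simp add: censored_def)

lemma measure_censored_cens_event: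
  assumes D: "obs_study d D" and S: "S \<in> sets (cov_base d)"
  shows "measure (censored d D) (cens_event d t S)
    = measure D {\<omega>\<in>space D. fst (snd \<omega>) = t \<and> xy_proj t \<omega> \<in> S}"
proof -
  note cens = measurable_censor_obs_study[OF D]
  have "censor -` cens_event d t S \<inter> space D = {\<omega>\<in>space D. fst (snd \<omega>) = t \<and> xy_proj t \<omega> \<in> S}"
    using measurable_space[OF cens]
    by (fastforce simp: cens_event_def censor_def xy_proj_def split: prod.splits)
  then show ?thesis
    unfolding censored_def using cens cens_event_sets[OF S] by (simp add: measure_distr)
qed

lemma realizable_censored_mass_bounds:
  assumes D: "realizable d PP DD D" and PP: "PP \<subseteq> P_O d c" and DD: "\<forall>f\<in>DD. is_density d f"
  obtains F where "F \<in> DD" "marg d D t = dens_meas d F"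
    "\<And>S. S \<in> sets (cov_base d) \<Longrightarrow> c * dprob d F S \<le> measure (censored d D) (cens_event d t S) \<and>
       measure (censored d D) (cens_event d t S) \<le> (1 - c) * dprob d F S"
proof -
  obtain F p where F: "F \<in> DD" "marg d D t = dens_meas d F" and p: "p \<in> PP" "is_propensity d D t p"
    using D unfolding realizable_def by blast
  have p_bounds: "c \<le> p z \<and> p z \<le> 1 - c" if "z \<in> space (cov_base d)" for z
    using p(1) PP that by (force simp: P_O_def)
  have obs: "obs_study d D" using D by (simp add: realizable_def)
  show ?thesis
  proof (rule that[OF F])
    fix S assume S: "S \<in> sets (cov_base d)"
    have "is_density d F" using F(1) DD by blast
    from joint_mass_bounds_by_propensity[OF p(2) this F(2) p_bounds S]
    show "c * dprob d F S \<le> measure (censored d D) (cens_event d t S) \<and>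
        measure (censored d D) (cens_event d t S) \<le> (1 - c) * dprob d F S"
      by (simp add: measure_censored_cens_event[OF obs S])
  qed
qed

(* A single candidate is returned untested: the sample size only pays for a union bound
   once there are at least two candidates. *)
definition select_candidate :: "nat \<Rightarrow> real \<Rightarrow> real \<Rightarrow> ((nat \<Rightarrow> real) \<times> real \<Rightarrow> real) list
    \<Rightarrow> (((nat \<Rightarrow> real) \<times> real) set \<Rightarrow> real) \<Rightarrow> ((nat \<Rightarrow> real) \<times> real \<Rightarrow> real)" where
  "select_candidate d c s xs h =
     (if length xs \<le> 1 then xs ! 0
      else xs ! (LEAST k. k < length xs \<and> passes_tests d c s (set xs) h (xs ! k)))"

lemma select_candidate_short: "length xs \<le> 1 \<Longrightarrow> select_candidate d c s xs h = xs ! 0"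
  by (simp add: select_candidate_def)

lemma select_candidate_passes:
  assumes P: "P \<in> set xs" "passes_tests d c s (set xs) h P"
  shows "select_candidate d c s xs h \<in> set xs \<and>
    passes_tests d c s (set xs) h (select_candidate d c s xs h)"
proof (cases "length xs \<le> 1")
  case True
  with P(1) have "xs = [P]" by (cases xs) auto
  with P show ?thesis by (simp add: select_candidate_def)
next
  case False
  define k where "k = (LEAST k. k < length xs \<and> passes_tests d c s (set xs) h (xs ! k))"
  obtain j where j: "j < length xs" "xs ! j = P" using P(1) by (metis in_set_conv_nth)
  have "k < length xs \<and> passes_tests d c s (set xs) h (xs ! k)"
    unfolding k_def by (rule LeastI[where k=j]) (simp add: j P(2))
  moreover have "select_candidate d c s xs h = xs ! k"
    using False unfolding select_candidate_def k_def by (rule if_not_P)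
  ultimately show ?thesis by simp
qed

lemma select_candidate_close:
  assumes c: "0 < c" "c < 1/2" and e: "0 < e" and m: "0 < M e"
    and cond: "condition4 d DD M c" and DD: "\<forall>f\<in>DD. is_density d f" "set xs \<subseteq> DD"
    and F: "F \<in> DD" and I: "I \<in> set xs"
    and a: "0 \<le> a" "a \<le> M e / 256" and u: "0 \<le> u" "u \<le> M e / 32"
    and close: "\<And>S. S \<in> sets (cov_base d) \<Longrightarrow> \<bar>dprob d F S - dprob d I S\<bar> \<le> a"
    and g: "\<And>S. S \<in> sets (cov_base d) \<Longrightarrow> c * dprob d F S \<le> g S \<and> g S \<le> (1 - c) * dprob d F S"
    and h: "\<And>P Q b. P \<in> set xs \<Longrightarrow> Q \<in> set xs \<Longrightarrow>
      \<bar>h (test_region d c P Q b) - g (test_region d c P Q b)\<bar> \<le> u"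
  shows "\<bar>mean_y d (select_candidate d c (a + u) xs h) - mean_y d F\<bar> \<le> e"
proof -
  have "passes_tests d c (a + u) (set xs) h I"
    by (rule passes_tests_if_close[OF _ _ a(1) close g h[OF I]]) (use c I DD in auto)
  then have sel: "select_candidate d c (a + u) xs h \<in> set xs"
    "passes_tests d c (a + u) {I} h (select_candidate d c (a + u) xs h)"
    using select_candidate_passes[OF I] passes_tests_subset I by blast+
  show ?thesis
  proof (rule mean_y_close_if_passes_test[OF c e m cond F _ _ _ _ a u close g _ sel(2)])
    show "select_candidate d c (a + u) xs h \<in> DD" using sel(1) DD(2) by blast
    then show "is_density d (select_candidate d c (a + u) xs h)" using DD(1) by blast
    show "is_density d F" "is_density d I" using F I DD by auto
    show "\<bar>h (test_region d c (select_candidate d c (a + u) xs h) I b)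
        - g (test_region d c (select_candidate d c (a + u) xs h) I b)\<bar> \<le> u" for b
      using h[OF sel(1) I] .
  qed
qed

definition tau_estimator :: "nat \<Rightarrow> real \<Rightarrow> real \<Rightarrow> ((nat \<Rightarrow> real) \<times> real \<Rightarrow> real) list \<Rightarrow> nat
    \<Rightarrow> (nat \<Rightarrow> (nat \<Rightarrow> real) \<times> bool \<times> real) \<Rightarrow> real" where
  "tau_estimator d c s xs n \<omega> =
     mean_y d (select_candidate d c s xs (\<lambda>S. emp_freq d n True S \<omega>)) -
     mean_y d (select_candidate d c s xs (\<lambda>S. emp_freq d n False S \<omega>))"

lemma tau_estimator_measurable [measurable]:
  assumes C: "sets C = sets (cens_base d)" and xs: "\<forall>P\<in>set xs. is_density d P"
  shows "tau_estimator d c s xs n \<in> borel_measurable (PiM {..<n} (\<lambda>_. C))"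
proof -
  have [measurable]:
    "emp_freq d n t (test_region d c (xs ! k) Q b) \<in> borel_measurable (PiM {..<n} (\<lambda>_. C))"
    if "k < length xs" "Q \<in> set xs" for t k Q b
    using that C xs by (intro emp_freq_measurable test_region_sets) auto
  have [measurable]: "Measurable.pred (PiM {..<n} (\<lambda>_. C))
      (\<lambda>\<omega>. passes_tests d c s (set xs) (\<lambda>S. emp_freq d n t S \<omega>) (xs ! k))"
    if "k < length xs" for t k
    using that unfolding passes_tests_def by measurable
  have "(\<lambda>\<omega>. select_candidate d c s xs (\<lambda>S. emp_freq d n t S \<omega>))
      \<in> measurable (PiM {..<n} (\<lambda>_. C)) (count_space UNIV)" for t
    unfolding select_candidate_def by measurable
  from measurable_compose[OF this borel_measurable_count_space]
  show ?thesis
    unfolding tau_estimator_def[abs_def] by (intro borel_measurable_diff)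
qed

lemma realizable_marginal_representatives:
  assumes D: "realizable d PP DD D" "integrable D outcome0" "integrable D outcome1"
    and PP: "PP \<subseteq> P_O d c" and DD: "\<forall>f\<in>DD. is_density d f"
    and cover: "\<And>f. f \<in> DD \<Longrightarrow> \<exists>I\<in>set xs. \<forall>S\<in>sets (cov_base d). \<bar>dprob d f S - dprob d I S\<bar> \<le> a"
  obtains F I where "\<And>t. F t \<in> DD" "\<And>t. I t \<in> set xs"
    "\<And>t S. S \<in> sets (cov_base d) \<Longrightarrow> \<bar>dprob d (F t) S - dprob d (I t) S\<bar> \<le> a"
    "\<And>t S. S \<in> sets (cov_base d) \<Longrightarrow> c * dprob d (F t) S \<le> measure (censored d D) (cens_event d t S) \<and>
       measure (censored d D) (cens_event d t S) \<le> (1 - c) * dprob d (F t) S"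
    "ate D = mean_y d (F True) - mean_y d (F False)"
proof -
  have "\<forall>t. \<exists>F. F \<in> DD \<and> marg d D t = dens_meas d F \<and> (\<forall>S\<in>sets (cov_base d).
      c * dprob d F S \<le> measure (censored d D) (cens_event d t S) \<and>
      measure (censored d D) (cens_event d t S) \<le> (1 - c) * dprob d F S)"
  proof
    fix t
    obtain F where "F \<in> DD" "marg d D t = dens_meas d F"
      "\<And>S. S \<in> sets (cov_base d) \<Longrightarrow> c * dprob d F S \<le> measure (censored d D) (cens_event d t S) \<and>
         measure (censored d D) (cens_event d t S) \<le> (1 - c) * dprob d F S"
      using realizable_censored_mass_bounds[OF D(1) PP DD, where t=t] by blast
    then show "\<exists>F. F \<in> DD \<and> marg d D t = dens_meas d F \<and> (\<forall>S\<in>sets (cov_base d).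
        c * dprob d F S \<le> measure (censored d D) (cens_event d t S) \<and>
        measure (censored d D) (cens_event d t S) \<le> (1 - c) * dprob d F S)"
      by blast
  qed
  then obtain F where F: "\<forall>t. F t \<in> DD \<and> marg d D t = dens_meas d (F t) \<and> (\<forall>S\<in>sets (cov_base d).
      c * dprob d (F t) S \<le> measure (censored d D) (cens_event d t S) \<and>
      measure (censored d D) (cens_event d t S) \<le> (1 - c) * dprob d (F t) S)"
    by (rule choice[THEN exE])
  have "\<forall>t. \<exists>I. I \<in> set xs \<and> (\<forall>S\<in>sets (cov_base d). \<bar>dprob d (F t) S - dprob d I S\<bar> \<le> a)"
    using cover F by blast
  then obtain I where I:
    "\<forall>t. I t \<in> set xs \<and> (\<forall>S\<in>sets (cov_base d). \<bar>dprob d (F t) S - dprob d (I t) S\<bar> \<le> a)"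
    by (rule choice[THEN exE])
  have "obs_study d D" using D by (simp add: realizable_def)
  then have "ate D = mean_y d (F True) - mean_y d (F False)"
    using ate_eq_mean_y_diff[OF _ D(2,3)] F DD by auto
  with F I show ?thesis by (intro that) auto
qed

lemma tau_estimator_close:
  assumes c: "0 < c" "c < 1/2" and e: "0 < e" and m: "0 < M e"
    and cond: "condition4 d DD M c" and DD: "\<forall>f\<in>DD. is_density d f" "set xs \<subseteq> DD"
    and a: "0 \<le> a" "a \<le> M e / 256" and u: "0 \<le> u" "u \<le> M e / 32"
    and F: "\<And>t. F t \<in> DD" and I: "\<And>t. I t \<in> set xs"
    and close: "\<And>t S. S \<in> sets (cov_base d) \<Longrightarrow> \<bar>dprob d (F t) S - dprob d (I t) S\<bar> \<le> a"
    and g: "\<And>t S. S \<in> sets (cov_base d) \<Longrightarrow>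
      c * dprob d (F t) S \<le> g t S \<and> g t S \<le> (1 - c) * dprob d (F t) S"
    and ate: "\<tau> = mean_y d (F True) - mean_y d (F False)"
    and accurate: "length xs \<le> 1 \<or> (\<forall>t P Q b. P \<in> set xs \<longrightarrow> Q \<in> set xs \<longrightarrow>
      \<bar>emp_freq d n t (test_region d c P Q b) \<omega> - g t (test_region d c P Q b)\<bar> \<le> u)"
  shows "\<bar>tau_estimator d c (a + u) xs n \<omega> - \<tau>\<bar> \<le> 2 * e"
proof -
  have select_close: "\<bar>mean_y d (select_candidate d c (a + v) xs h) - mean_y d (F t)\<bar> \<le> e"
    if "0 \<le> v" "v \<le> M e / 32"
      "\<And>P Q b. P \<in> set xs \<Longrightarrow> Q \<in> set xs \<Longrightarrow>
        \<bar>h (test_region d c P Q b) - g t (test_region d c P Q b)\<bar> \<le> v"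
    for t h v
    by (rule select_candidate_close[OF c e m cond DD F I a that(1,2) close g that(3)])
  have "\<bar>mean_y d (select_candidate d c (a + u) xs (\<lambda>S. emp_freq d n t S \<omega>)) - mean_y d (F t)\<bar> \<le> e"
    for t
  proof (cases "length xs \<le> 1")
    case True
    then have "select_candidate d c (a + u) xs (\<lambda>S. emp_freq d n t S \<omega>)
        = select_candidate d c (a + 0) xs (g t)"
      by (simp add: select_candidate_short)
    moreover have "\<bar>mean_y d (select_candidate d c (a + 0) xs (g t)) - mean_y d (F t)\<bar> \<le> e"
      by (rule select_close) (use m in auto)
    ultimately show ?thesis by simp
  next
    case False
    with accurate show ?thesis
      by (intro select_close[OF u]) auto
  qed
  from this[of True] this[of False] show ?thesis
    unfolding tau_estimator_def ate abs_le_iff by linarith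
qed

lemma tau_estimator_correct:
  assumes c: "0 < c" "c < 1/2" and e: "0 < e" and m: "0 < M e"
    and cond: "condition4 d DD M c" and DD: "\<forall>f\<in>DD. is_density d f" "set xs \<subseteq> DD"
    and PP: "PP \<subseteq> P_O d c" and a: "0 \<le> a" "a \<le> M e / 256" and \<delta>: "0 \<le> \<delta>"
    and cover: "\<And>f. f \<in> DD \<Longrightarrow> \<exists>I\<in>set xs. \<forall>S\<in>sets (cov_base d). \<bar>dprob d f S - dprob d I S\<bar> \<le> a"
    and sample: "2 \<le> length xs \<Longrightarrow>
      0 < n \<and> 8 * real (length xs) ^ 2 * exp (- 2 * real n * (M e / 32)\<^sup>2) \<le> \<delta>"
    and D: "realizable d PP DD D" "integrable D outcome0" "integrable D outcome1"
  shows "1 - \<delta> \<le> measure (\<Pi>\<^sub>M i\<in>{..<n}. censored d D)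
    {\<omega> \<in> space (\<Pi>\<^sub>M i\<in>{..<n}. censored d D).
      \<bar>tau_estimator d c (a + M e / 32) xs n \<omega> - ate D\<bar> \<le> 2 * e}"
proof -
  define u where "u = M e / 32"
  define C where "C = censored d D"
  define PS where "PS = PiM {..<n} (\<lambda>_. C)"
  define E where "E = {\<omega> \<in> space PS. \<bar>tau_estimator d c (a + u) xs n \<omega> - ate D\<bar> \<le> 2 * e}"
  have u: "0 \<le> u" "u \<le> M e / 32" using m by (simp_all add: u_def)
  have C: "prob_space C" "sets C = sets (cens_base d)"
    using D(1) prob_space_censored by (auto simp: C_def realizable_def)
  interpret PS: prob_space PS unfolding PS_def using C by (intro prob_space_PiM) auto
  obtain F I where F: "\<And>t. F t \<in> DD" and I: "\<And>t. I t \<in> set xs"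
    and close: "\<And>t S. S \<in> sets (cov_base d) \<Longrightarrow> \<bar>dprob d (F t) S - dprob d (I t) S\<bar> \<le> a"
    and g: "\<And>t S. S \<in> sets (cov_base d) \<Longrightarrow> c * dprob d (F t) S \<le> measure C (cens_event d t S) \<and>
       measure C (cens_event d t S) \<le> (1 - c) * dprob d (F t) S"
    and ate: "ate D = mean_y d (F True) - mean_y d (F False)"
    using realizable_marginal_representatives[OF D PP DD(1) cover] unfolding C_def by metis
  have estimate_close: "\<bar>tau_estimator d c (a + u) xs n \<omega> - ate D\<bar> \<le> 2 * e"
    if "length xs \<le> 1 \<or> (\<forall>t P Q b. P \<in> set xs \<longrightarrow> Q \<in> set xs \<longrightarrow>
      \<bar>emp_freq d n t (test_region d c P Q b) \<omega>
        - measure C (cens_event d t (test_region d c P Q b))\<bar> \<le> u)"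
    for \<omega>
    using tau_estimator_close[OF c e m cond DD a u F I close g ate that] .
  show ?thesis
  proof (cases "length xs \<le> 1")
    case True
    then have "E = space PS" using estimate_close[OF disjI1] by (auto simp: E_def)
    then show ?thesis
      using \<delta> PS.prob_space unfolding E_def PS_def C_def u_def by simp
  next
    case False
    then have n: "0 < n" and bound: "8 * real (length xs) ^ 2 * exp (- 2 * real n * u\<^sup>2) \<le> \<delta>"
      using sample by (auto simp: u_def)
    define J where "J = (UNIV :: bool set) \<times> set xs \<times> set xs \<times> (UNIV :: bool set)"
    define G where "G = (\<lambda>(t, P, Q, b). cens_event d t (test_region d c P Q b))"
    have G: "G j \<in> sets C" if "j \<in> J" for j
      using that DD C(2) by (auto simp: J_def G_def intro!: cens_event_sets test_region_sets)
    have J: "finite J" "card J = 4 * card (set xs) ^ 2"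
      by (simp_all add: J_def card_cartesian_product power2_eq_square)
    have "{\<omega> \<in> space PS. \<forall>j\<in>J. \<bar>(\<Sum>i<n. indicator (G j) (\<omega> i)) / real n - measure C (G j)\<bar> < u} \<subseteq> E"
    proof
      fix \<omega>
      assume "\<omega> \<in> {\<omega> \<in> space PS.
        \<forall>j\<in>J. \<bar>(\<Sum>i<n. indicator (G j) (\<omega> i)) / real n - measure C (G j)\<bar> < u}"
      then have \<omega>: "\<omega> \<in> space PS"
        and good: "\<And>j. j \<in> J \<Longrightarrow> \<bar>(\<Sum>i<n. indicator (G j) (\<omega> i)) / real n - measure C (G j)\<bar> < u"
        by auto
      have "\<bar>emp_freq d n t (test_region d c P Q b) \<omega>
          - measure C (cens_event d t (test_region d c P Q b))\<bar> \<le> u"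
        if "P \<in> set xs" "Q \<in> set xs" for t P Q b
        using good[of "(t, P, Q, b)"] that by (simp add: J_def G_def emp_freq_def)
      then show "\<omega> \<in> E"
        using \<omega> estimate_close[OF disjI2] by (simp add: E_def)
    qed
    moreover have [measurable]: "tau_estimator d c (a + u) xs n \<in> borel_measurable PS"
      unfolding PS_def using C(2) DD by (intro tau_estimator_measurable) auto
    then have "E \<in> sets PS" unfolding E_def by measurable
    ultimately have good_le_E: "PS.prob
        {\<omega> \<in> space PS. \<forall>j\<in>J. \<bar>(\<Sum>i<n. indicator (G j) (\<omega> i)) / real n - measure C (G j)\<bar> < u}
      \<le> PS.prob E"
      by (rule PS.finite_measure_mono)
    have "4 * real (card (set xs)) ^ 2 * (2 * exp (- 2 * real n * u\<^sup>2)) \<le> \<delta>"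
      using card_length[of xs] by (intro order_trans[OF _ bound]) (simp add: power_mono)
    then have "1 - \<delta> \<le> 1 - real (card J) * (2 * exp (- 2 * real n * u\<^sup>2))"
      using J(2) by simp
    also have "\<dots> \<le> PS.prob
        {\<omega> \<in> space PS. \<forall>j\<in>J. \<bar>(\<Sum>i<n. indicator (G j) (\<omega> i)) / real n - measure C (G j)\<bar> < u}"
      unfolding PS_def
      by (rule prob_empirical_freqs_uniformly_close[where G=G, OF C(1) J(1) G n u(1)])
    also note good_le_E
    finally show ?thesis
      unfolding E_def PS_def C_def u_def .
  qed
qed

lemma sample_size_suffices:
  fixes L N n :: nat and m \<delta> r :: real
  assumes L: "2 \<le> L" "L \<le> N" and \<delta>: "0 < \<delta>" "\<delta> < 1" and m: "0 < m" and r: "0 \<le> r"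
    and n: "2560 / m\<^sup>2 * (r + ln (real N / \<delta>)) \<le> real n"
  shows "0 < n \<and> 8 * real L ^ 2 * exp (- 2 * real n * (m / 32)\<^sup>2) \<le> \<delta>"
proof -
  have N: "2 \<le> real N" using L by linarith
  have ln_N\<delta>: "ln (real N / \<delta>) = ln (real N) - ln \<delta>" using N \<delta> by (simp add: ln_div)
  have "0 < ln (real N / \<delta>)" using N \<delta> by (simp add: ln_div)
  moreover have "2560 / m\<^sup>2 * ln (real N / \<delta>) \<le> 2560 / m\<^sup>2 * (r + ln (real N / \<delta>))"
    using r by (intro mult_left_mono) auto
  with n have "2560 / m\<^sup>2 * ln (real N / \<delta>) \<le> real n" by linarith
  ultimately have "0 < n" and n': "5 * ln (real N / \<delta>) \<le> 2 * real n * (m / 32)\<^sup>2"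
    using m by (auto simp: field_simps power2_eq_square intro: ccontr)
  have "ln (8 * real L ^ 2) = 3 * ln 2 + 2 * ln (real L)"
    using L ln_realpow[of 2 3] ln_realpow[of "real L" 2] by (simp add: ln_mult)
  also have "\<dots> \<le> 5 * ln (real N)"
  proof -
    have "ln 2 \<le> ln (real N)" "ln (real L) \<le> ln (real N)" using L N by simp_all
    then show ?thesis by linarith
  qed
  also have "\<dots> \<le> 5 * ln (real N / \<delta>) + ln \<delta>"
    using ln_N\<delta> \<delta> by simp
  finally have "ln (8 * real L ^ 2) - 2 * real n * (m / 32)\<^sup>2 \<le> ln \<delta>"
    using n' by linarith
  then have "exp (ln (8 * real L ^ 2) - 2 * real n * (m / 32)\<^sup>2) \<le> \<delta>"
    using \<delta> by (metis exp_le_cancel_iff exp_ln)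
  moreover have "exp (ln (8 * real L ^ 2) - 2 * real n * (m / 32)\<^sup>2)
      = 8 * real L ^ 2 * exp (- 2 * real n * (m / 32)\<^sup>2)"
    using L by (simp only: diff_conv_add_uminus exp_add mult_minus_left) simp
  ultimately show ?thesis
    using \<open>0 < n\<close> by simp
qed

lemma covering_number_attained:
  assumes "cover_finite d \<alpha> DD"
  obtains C where "is_cover d \<alpha> DD C" "card C = covering_number d \<alpha> DD"
proof -
  have "{card C | C. is_cover d \<alpha> DD C} \<noteq> {}" using assms by (auto simp: cover_finite_def)
  from Inf_nat_def1[OF this] obtain C where "is_cover d \<alpha> DD C" "covering_number d \<alpha> DD = card C"
    unfolding covering_number_def by blast
  with that show ?thesis by simp
qed

lemma cover_representatives:
  assumes C: "is_cover d \<alpha> DD C" and DD: "\<forall>f\<in>DD. is_density d f"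
  obtains xs where "set xs \<subseteq> DD" "length xs \<le> card C"
    "\<And>f. f \<in> DD \<Longrightarrow> \<exists>P\<in>set xs. \<forall>S\<in>sets (cov_base d). \<bar>dprob d f S - dprob d P S\<bar> \<le> 2 * \<alpha>"
proof -
  define C' where "C' = {Q \<in> C. \<exists>P\<in>DD. tv_dist (dens_meas d P) Q \<le> \<alpha>}"
  define rep where "rep Q = (SOME P. P \<in> DD \<and> tv_dist (dens_meas d P) Q \<le> \<alpha>)" for Q
  have rep: "rep Q \<in> DD" "tv_dist (dens_meas d (rep Q)) Q \<le> \<alpha>" if "Q \<in> C'" for Q
    using someI_ex[of "\<lambda>P. P \<in> DD \<and> tv_dist (dens_meas d P) Q \<le> \<alpha>"] that
    unfolding C'_def rep_def by auto
  have fin: "finite C" "C' \<subseteq> C" using C by (auto simp: C'_def is_cover_def)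
  then have "finite C'" by (rule finite_subset[rotated])
  then obtain xs where xs: "set xs = rep ` C'" "distinct xs"
    using finite_distinct_list[OF finite_imageI[of C' rep]] by blast
  have TV_close: "\<bar>dprob d P S - measure Q S\<bar> \<le> \<alpha>"
    if "Q \<in> C" "P \<in> DD" "tv_dist (dens_meas d P) Q \<le> \<alpha>" "S \<in> sets (cov_base d)" for P Q S
    using measure_diff_le_tv_dist[of "dens_meas d P" Q S] that DD C
    by (auto simp: is_density_def is_cover_def)
  show ?thesis
  proof (rule that)
    show "set xs \<subseteq> DD" using rep xs by auto
    have "length xs = card (rep ` C')" using xs by (metis distinct_card)
    also have "\<dots> \<le> card C'" using \<open>finite C'\<close> by (rule card_image_le)
    also have "\<dots> \<le> card C" using fin by (rule card_mono)
    finally show "length xs \<le> card C" .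
    fix f assume f: "f \<in> DD"
    then obtain Q where Q: "Q \<in> C" "tv_dist (dens_meas d f) Q \<le> \<alpha>"
      using C by (auto simp: is_cover_def)
    then have Q': "Q \<in> C'" using f by (auto simp: C'_def)
    have "\<bar>dprob d f S - dprob d (rep Q) S\<bar> \<le> 2 * \<alpha>" if "S \<in> sets (cov_base d)" for S
      using TV_close[OF Q(1) f Q(2) that] TV_close[OF Q(1) rep[OF Q'] that]
      by (simp add: abs_le_iff)
    moreover have "rep Q \<in> set xs" using xs(1) Q' by simp
    ultimately show "\<exists>P\<in>set xs. \<forall>S\<in>sets (cov_base d). \<bar>dprob d f S - dprob d P S\<bar> \<le> 2 * \<alpha>"
      by blast
  qed
qed

lemma tau_estimator_sample_complexity:
  fixes c \<sigma> \<epsilon> \<delta> :: real and M :: "real \<Rightarrow> real"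
  assumes c: "0 < c" "c < 1/2" and \<sigma>: "0 < \<sigma>" "\<sigma> < 1" and \<epsilon>: "0 < \<epsilon>" and \<delta>: "0 < \<delta>" "\<delta> < 1"
    and PP: "PP \<subseteq> P_O d c" and DD: "\<forall>f\<in>DD. is_density d f"
    and M: "\<forall>e>0. 0 \<le> M e \<and> M e \<le> 1" "M (\<epsilon>/2) > 0"
    and cond: "condition4 d DD M c" and cover: "cover_finite d (1/256 * c * M (\<epsilon>/2)) DD"
  shows "\<exists>A. \<forall>n. real n \<ge> 10 * (1 / (1/256 * M (\<epsilon>/2)^2)) *
             (real (fat d (1/256 * c * \<sigma> * M (\<epsilon>/2)) PP) * ln (1 / (1/256 * c * \<sigma> * M (\<epsilon>/2)))
              + ln (real (covering_number d (1/256 * c * M (\<epsilon>/2)) DD) / \<delta>))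
          \<longrightarrow> (\<forall>D. realizable d PP DD D \<and> integrable D outcome0 \<and> integrable D outcome1 \<longrightarrow>
                 measure (\<Pi>\<^sub>M i\<in>{..<n}. censored d D)
                   {\<omega> \<in> space (\<Pi>\<^sub>M i\<in>{..<n}. censored d D). \<bar>A n \<omega> - ate D\<bar> \<le> \<epsilon>}
                 \<ge> 1 - \<delta>)"
proof -
  define m where "m = M (\<epsilon>/2)"
  define \<gamma> where "\<gamma> = 1/256 * c * \<sigma> * m"
  define \<alpha> where "\<alpha> = 1/256 * c * m"
  have m: "0 < m" "m \<le> 1" using M \<epsilon> by (auto simp: m_def)
  obtain C where C: "is_cover d \<alpha> DD C" "card C = covering_number d \<alpha> DD"
    using covering_number_attained cover unfolding \<alpha>_def m_def by blast
  obtain xs where xs: "set xs \<subseteq> DD" "length xs \<le> covering_number d \<alpha> DD"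
    and repr: "\<And>f. f \<in> DD \<Longrightarrow> \<exists>P\<in>set xs. \<forall>S\<in>sets (cov_base d). \<bar>dprob d f S - dprob d P S\<bar> \<le> 2 * \<alpha>"
    using cover_representatives[OF C(1) DD] C(2) by metis
  have "c * \<sigma> * m \<le> 1" using c \<sigma> m by (intro mult_le_one) auto
  then have "0 < \<gamma>" "\<gamma> \<le> 1" using c \<sigma> m unfolding \<gamma>_def by auto
  then have fat_term: "0 \<le> real (fat d \<gamma> PP) * ln (1 / \<gamma>)" by simp
  show ?thesis
  proof (intro exI[of _ "tau_estimator d c (2 * \<alpha> + m / 32) xs"] allI impI)
    fix n D
    assume "real n \<ge> 10 * (1 / (1/256 * M (\<epsilon>/2)^2)) *
        (real (fat d (1/256 * c * \<sigma> * M (\<epsilon>/2)) PP) * ln (1 / (1/256 * c * \<sigma> * M (\<epsilon>/2)))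
         + ln (real (covering_number d (1/256 * c * M (\<epsilon>/2)) DD) / \<delta>))"
    then have n: "2560 / m\<^sup>2 *
        (real (fat d \<gamma> PP) * ln (1 / \<gamma>) + ln (real (covering_number d \<alpha> DD) / \<delta>))
        \<le> real n"
      unfolding m_def \<gamma>_def \<alpha>_def by simp
    assume "realizable d PP DD D \<and> integrable D outcome0 \<and> integrable D outcome1"
    then have D: "realizable d PP DD D" "integrable D outcome0" "integrable D outcome1" by auto
    have "1 - \<delta> \<le> measure (\<Pi>\<^sub>M i\<in>{..<n}. censored d D) {\<omega> \<in> space (\<Pi>\<^sub>M i\<in>{..<n}. censored d D).
        \<bar>tau_estimator d c (2 * \<alpha> + M (\<epsilon>/2) / 32) xs n \<omega> - ate D\<bar> \<le> 2 * (\<epsilon>/2)}"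
    proof (rule tau_estimator_correct[OF c _ _ cond DD xs(1) PP _ _ _ repr _ D])
      show "2 \<le> length xs \<Longrightarrow>
          0 < n \<and> 8 * real (length xs) ^ 2 * exp (- 2 * real n * (M (\<epsilon>/2) / 32)\<^sup>2) \<le> \<delta>"
        using sample_size_suffices[OF _ xs(2) \<delta> m(1) fat_term n] by (simp add: m_def)
    qed (use \<epsilon> m \<delta> c in \<open>auto simp: m_def \<alpha>_def\<close>)
    then show "1 - \<delta> \<le> measure (\<Pi>\<^sub>M i\<in>{..<n}. censored d D) {\<omega> \<in> space (\<Pi>\<^sub>M i\<in>{..<n}. censored d D).
        \<bar>tau_estimator d c (2 * \<alpha> + m / 32) xs n \<omega> - ate D\<bar> \<le> \<epsilon>}"
      unfolding m_def by simp
  qed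
qed

theorem theorem5p2:
  shows "\<exists>\<eta> K::real. \<eta> \<ge> 1/256 \<and> K > 0 \<and>
    (\<forall>(d::nat) (c::real) (\<sigma>::real) (\<epsilon>::real) (\<delta>::real) \<mu> PP DD (M::real \<Rightarrow> real).
      0 < c \<and> c < 1/2 \<and> 0 < \<sigma> \<and> \<sigma> < 1 \<and> 0 < \<epsilon> \<and> \<epsilon> < 1 \<and> 0 < \<delta> \<and> \<delta> < 1 \<and>
      is_density d \<mu> \<and> PP \<subseteq> P_O d c \<and> (\<forall>f\<in>DD. is_density d f) \<and>
      (\<forall>e>0. 0 \<le> M e \<and> M e \<le> 1) \<and> M (\<epsilon>/2) > 0 \<and>
      condition4 d DD M c \<and>
      (\<forall>P\<in>DD. smooth d \<sigma> \<mu> P) \<and>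
      fat_finite d (\<eta> * c * \<sigma> * M (\<epsilon>/2)) PP \<and>
      cover_finite d (\<eta> * c * M (\<epsilon>/2)) DD
      \<longrightarrow>
      (\<exists>A :: nat \<Rightarrow> (nat \<Rightarrow> (nat \<Rightarrow> real) \<times> bool \<times> real) \<Rightarrow> real.
        \<forall>n::nat. real n \<ge> K * (1 / (\<eta> * M (\<epsilon>/2)^2)) *
             (real (fat d (\<eta> * c * \<sigma> * M (\<epsilon>/2)) PP) * ln (1 / (\<eta> * c * \<sigma> * M (\<epsilon>/2)))
              + ln (real (covering_number d (\<eta> * c * M (\<epsilon>/2)) DD) / \<delta>))
          \<longrightarrow> (\<forall>D. realizable d PP DD D \<and> integrable D outcome0 \<and> integrable D outcome1 \<longrightarrow>
                 measure (\<Pi>\<^sub>M i\<in>{..<n}. censored d D)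
                   {\<omega> \<in> space (\<Pi>\<^sub>M i\<in>{..<n}. censored d D). \<bar>A n \<omega> - ate D\<bar> \<le> \<epsilon>}
                 \<ge> 1 - \<delta>)))"
proof (rule exI[of _ "1/256"], rule exI[of _ 10], intro conjI allI impI)
  show "(1/256 :: real) \<ge> 1/256" "(10 :: real) > 0" by simp_all
qed (elim conjE, rule tau_estimator_sample_complexity)

end
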